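(* Let $G=(L\cup R,E)$ be a $(c,d,\alpha,\delta)$-bipartite expander with $L=[n]$, and $C_0\subseteq\mathbb{F}_2^d$ a linear code of minimum distance $d_0\ge2$. Let $x\in\mathbb{F}_2^n$ and $y\in T(G,C_0)$ with $d_H(x,y)\le\alpha n$, and let $F=F(x,y)$. Then $$c|F|\ge|U(x)|\ge|N_{\le d_0-1}(F)|\ge\frac{\delta d_0-1}{d_0-1}\cdot c|F|.$$
   Context: A bipartite graph is $(c,d)$-regular if left degrees are $c$ and right degrees $d$. $N(S)$ is the neighborhood of $S$, $N_i(S)$ the set of vertices adjacent to exactly $i$ vertices of $S$, and $N_{\le t}(S)=\bigcup_{1\le j\le t}N_j(S)$. A $(c,d,\alpha,\delta)$-bipartite expander is a $(c,d)$-regular bipartite graph with $|N(S)|\ge\delta c|S|$ for every $S\subseteq L$ with $|S|\le\alpha|L|$. Tanner code: $L=[n]$, for each $v\in R$ a fixed ordering of $N(v)$ defines the restriction $x_{N(v)}\in\mathbb{F}_2^d$, and $T(G,C_0)=\{x\in\mathbb{F}_2^n: x_{N(v)}\in C_0\ \forall v\in R\}$. $F(x,y)=\{i\in[n]:x_i\ne y_i\}$ and $U(x)=\{v\in R:x_{N(v)}\notin C_0\}$. *)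

theory Defs
  imports Main "HOL-Library.Multiset" Complex_Main
begin

(* Bipartite graph: left vertices L = [n] = {1..n}, right vertex set R (finite),
   edge set E \<subseteq> L \<times> R (simple graph, no multi-edges). Field F_2 is modelled by bool,
   addition being xor (\<noteq>). Vectors in F_2^n are functions nat \<Rightarrow> bool of which only
   the values on {1..n} matter. *)

definition nbhd :: "(nat \<times> 'r) set \<Rightarrow> 'r set \<Rightarrow> nat set \<Rightarrow> 'r set" where
  "nbhd E R S = {v \<in> R. \<exists>u \<in> S. (u, v) \<in> E}"

definition nbhd_exact :: "(nat \<times> 'r) set \<Rightarrow> 'r set \<Rightarrow> nat \<Rightarrow> nat set \<Rightarrow> 'r set" where
  "nbhd_exact E R i S = {v \<in> R. card {u \<in> S. (u, v) \<in> E} = i}"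

definition nbhd_le :: "(nat \<times> 'r) set \<Rightarrow> 'r set \<Rightarrow> nat \<Rightarrow> nat set \<Rightarrow> 'r set" where
  "nbhd_le E R t S = (\<Union>j \<in> {1..t}. nbhd_exact E R j S)"

definition bip_regular :: "nat \<Rightarrow> 'r set \<Rightarrow> (nat \<times> 'r) set \<Rightarrow> nat \<Rightarrow> nat \<Rightarrow> bool" where
  "bip_regular n R E c d \<longleftrightarrow> finite R \<and> E \<subseteq> {1..n} \<times> R \<and>
     (\<forall>u \<in> {1..n}. card {v \<in> R. (u, v) \<in> E} = c) \<and>
     (\<forall>v \<in> R. card {u \<in> {1..n}. (u, v) \<in> E} = d)"

definition bip_expander ::
  "nat \<Rightarrow> 'r set \<Rightarrow> (nat \<times> 'r) set \<Rightarrow> nat \<Rightarrow> nat \<Rightarrow> real \<Rightarrow> real \<Rightarrow> bool" where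
  "bip_expander n R E c d \<alpha> \<delta> \<longleftrightarrow> bip_regular n R E c d \<and>
     (\<forall>S \<subseteq> {1..n}. real (card S) \<le> \<alpha> * real n \<longrightarrow>
        real (card (nbhd E R S)) \<ge> \<delta> * real c * real (card S))"

definition valid_orderings :: "'r set \<Rightarrow> (nat \<times> 'r) set \<Rightarrow> nat \<Rightarrow> ('r \<Rightarrow> nat \<Rightarrow> nat) \<Rightarrow> bool" where
  "valid_orderings R E d ord \<longleftrightarrow>
     (\<forall>v \<in> R. bij_betw (ord v) {..<d} {u. (u, v) \<in> E})"

definition restr :: "('r \<Rightarrow> nat \<Rightarrow> nat) \<Rightarrow> nat \<Rightarrow> 'r \<Rightarrow> (nat \<Rightarrow> bool) \<Rightarrow> bool list" where
  "restr ord d v x = map (\<lambda>j. x (ord v j)) [0..<d]"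

(* words in F_2^d are bool lists of length d *)
definition hamming_list :: "bool list \<Rightarrow> bool list \<Rightarrow> nat" where
  "hamming_list w w' = card {j. j < length w \<and> w ! j \<noteq> w' ! j}"

definition linear_code :: "nat \<Rightarrow> bool list set \<Rightarrow> bool" where
  "linear_code d C \<longleftrightarrow> C \<subseteq> {w. length w = d} \<and> replicate d False \<in> C \<and>
     (\<forall>w \<in> C. \<forall>w' \<in> C. map2 (\<noteq>) w w' \<in> C)"

definition min_distance :: "bool list set \<Rightarrow> nat \<Rightarrow> bool" where
  "min_distance C d0 \<longleftrightarrow>
     (\<exists>w \<in> C. \<exists>w' \<in> C. w \<noteq> w' \<and> hamming_list w w' = d0) \<and>
     (\<forall>w \<in> C. \<forall>w' \<in> C. w \<noteq> w' \<longrightarrow> hamming_list w w' \<ge> d0)"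

definition tanner_code ::
  "nat \<Rightarrow> 'r set \<Rightarrow> ('r \<Rightarrow> nat \<Rightarrow> nat) \<Rightarrow> nat \<Rightarrow> bool list set \<Rightarrow> (nat \<Rightarrow> bool) set" where
  "tanner_code n R ord d C = {x. \<forall>v \<in> R. restr ord d v x \<in> C}"

definition dH :: "nat \<Rightarrow> (nat \<Rightarrow> bool) \<Rightarrow> (nat \<Rightarrow> bool) \<Rightarrow> nat" where
  "dH n x y = card {i \<in> {1..n}. x i \<noteq> y i}"

definition diff_set :: "nat \<Rightarrow> (nat \<Rightarrow> bool) \<Rightarrow> (nat \<Rightarrow> bool) \<Rightarrow> nat set" where
  "diff_set n x y = {i \<in> {1..n}. x i \<noteq> y i}"

definition unsat :: "'r set \<Rightarrow> ('r \<Rightarrow> nat \<Rightarrow> nat) \<Rightarrow> nat \<Rightarrow> bool list set \<Rightarrow> (nat \<Rightarrow> bool) \<Rightarrow> 'r set" where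
  "unsat R ord d C x = {v \<in> R. restr ord d v x \<notin> C}"

end

theory Submission
  imports Defs
begin

text \<open>Write \<open>k(v)\<close> for the number of neighbours in \<open>F\<close> of a check \<open>v\<close>. Since \<open>x\<close> differs
  from the codeword \<open>y\<close> exactly on \<open>F\<close>, the local words of \<open>x\<close> and \<open>y\<close> at \<open>v\<close> differ in
  exactly \<open>k(v)\<close> positions: \<open>v\<close> is unsatisfied only if \<open>k(v) \<ge> 1\<close>, and surely if
  \<open>1 \<le> k(v) < d\<^sub>0\<close>. Double counting the \<open>c|F|\<close> edges leaving \<open>F\<close> gives \<open>|N(F)| \<le> c|F|\<close>
  and, as the vertices of \<open>N(F) - N\<^sub>\<le>\<^sub>t(F)\<close> have \<open>k(v) > t\<close>, also
  \<open>|N\<^sub>\<le>\<^sub>t(F)| + (t + 1) |N(F) - N\<^sub>\<le>\<^sub>t(F)| \<le> c|F|\<close>; with \<open>t = d\<^sub>0 - 1\<close> and the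
  expansion \<open>|N(F)| \<ge> \<delta>c|F|\<close> this is the last inequality.\<close>

definition deg_in :: "(nat \<times> 'r) set \<Rightarrow> nat set \<Rightarrow> 'r \<Rightarrow> nat" where
  "deg_in E S v = card {u \<in> S. (u, v) \<in> E}"

lemma nbhd_eq_deg_in:
  assumes "finite S"
  shows "nbhd E R S = {v \<in> R. 1 \<le> deg_in E S v}"
  using assms by (auto simp: nbhd_def deg_in_def Suc_le_eq card_gt_0_iff)

lemma nbhd_le_eq_deg_in:
  "nbhd_le E R t S = {v \<in> R. 1 \<le> deg_in E S v \<and> deg_in E S v \<le> t}"
  unfolding nbhd_le_def nbhd_exact_def deg_in_def by auto

lemma nbhd_le_subset_nbhd: "nbhd_le E R t S \<subseteq> nbhd E R S"
  unfolding nbhd_le_def nbhd_exact_def nbhd_def by (fastforce simp: Suc_le_eq card_gt_0_iff)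

lemma finite_nbhd: "finite R \<Longrightarrow> finite (nbhd E R S)"
  unfolding nbhd_def by simp

lemma bip_regular_sum_deg_in:
  assumes "bip_regular n R E c d" and "S \<subseteq> {1..n}"
  shows "(\<Sum>v\<in>R. deg_in E S v) = c * card S"
proof -
  have "finite S" using assms(2) finite_subset by blast
  moreover have "\<forall>u\<in>S. card {v \<in> R. (u, v) \<in> E} = c"
    using assms unfolding bip_regular_def by blast
  ultimately show ?thesis
    using assms(1) unfolding deg_in_def bip_regular_def by (intro sum_multicount) auto
qed

lemma bip_regular_sum_deg_in_nbhd:
  assumes "bip_regular n R E c d" and "S \<subseteq> {1..n}"
  shows "(\<Sum>v\<in>nbhd E R S. deg_in E S v) = c * card S"
proof -
  have "finite R" "finite S"
    using assms finite_subset unfolding bip_regular_def by blast+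
  then have "(\<Sum>v\<in>nbhd E R S. deg_in E S v) = (\<Sum>v\<in>R. deg_in E S v)"
    by (intro sum.mono_neutral_left) (auto simp: nbhd_eq_deg_in)
  then show ?thesis using bip_regular_sum_deg_in[OF assms] by simp
qed

lemma bip_regular_card_nbhd_bound:
  assumes "bip_regular n R E c d" and "S \<subseteq> {1..n}"
  shows "card (nbhd E R S) \<le> c * card S"
proof -
  have "finite S" using assms(2) finite_subset by blast
  have "card (nbhd E R S) = (\<Sum>v\<in>nbhd E R S. 1)" by simp
  also have "\<dots> \<le> (\<Sum>v\<in>nbhd E R S. deg_in E S v)"
    using \<open>finite S\<close> by (intro sum_mono) (auto simp: nbhd_eq_deg_in)
  finally show ?thesis using bip_regular_sum_deg_in_nbhd[OF assms] by simp
qed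

lemma bip_regular_card_nbhd_le_weighted_bound:
  assumes "bip_regular n R E c d" and "S \<subseteq> {1..n}"
  shows "card (nbhd_le E R t S) + Suc t * card (nbhd E R S - nbhd_le E R t S) \<le> c * card S"
proof -
  define NF where "NF = nbhd E R S"
  define NL where "NL = nbhd_le E R t S"
  have "finite S" "finite R"
    using assms finite_subset unfolding bip_regular_def by blast+
  then have NF: "NF = {v \<in> R. 1 \<le> deg_in E S v}" and "finite NF"
    unfolding NF_def by (auto simp: nbhd_eq_deg_in)
  have NL: "NL = {v \<in> R. 1 \<le> deg_in E S v \<and> deg_in E S v \<le> t}"
    unfolding NL_def by (rule nbhd_le_eq_deg_in)
  have "card NL = (\<Sum>v\<in>NL. 1)" by simp
  also have "\<dots> \<le> (\<Sum>v\<in>NL. deg_in E S v)"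
    using NL by (intro sum_mono) auto
  finally have low: "card NL \<le> (\<Sum>v\<in>NL. deg_in E S v)" .
  have "Suc t * card (NF - NL) = (\<Sum>v\<in>NF - NL. Suc t)" by simp
  also have "\<dots> \<le> (\<Sum>v\<in>NF - NL. deg_in E S v)"
    using NF NL by (intro sum_mono) auto
  finally have high: "Suc t * card (NF - NL) \<le> (\<Sum>v\<in>NF - NL. deg_in E S v)" .
  have "(\<Sum>v\<in>NF. deg_in E S v) = (\<Sum>v\<in>NL. deg_in E S v) + (\<Sum>v\<in>NF - NL. deg_in E S v)"
    using \<open>finite NF\<close> NF NL by (subst sum.subset_diff[of NL]) auto
  with low high bip_regular_sum_deg_in_nbhd[OF assms] show ?thesis
    unfolding NF_def NL_def by linarith
qed

lemma expander_card_nbhd_le_lower_bound: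
  assumes "bip_expander n R E c d \<alpha> \<delta>" and "S \<subseteq> {1..n}"
    and "real (card S) \<le> \<alpha> * real n" and "k \<ge> 2"
  shows "(\<delta> * real k - 1) / (real k - 1) * real c * real (card S)
           \<le> real (card (nbhd_le E R (k - 1) S))"
proof -
  define NF where "NF = nbhd E R S"
  define NL where "NL = nbhd_le E R (k - 1) S"
  have reg: "bip_regular n R E c d" and expand: "\<delta> * real c * real (card S) \<le> real (card NF)"
    using assms unfolding bip_expander_def NF_def by auto
  have "NL \<subseteq> NF" "finite NF"
    using reg unfolding NF_def NL_def bip_regular_def by (simp_all add: nbhd_le_subset_nbhd finite_nbhd)
  then have "card (NF - NL) = card NF - card NL" "card NL \<le> card NF"
    by (auto simp: card_Diff_subset finite_subset card_mono)
  moreover have "card NL + k * card (NF - NL) \<le> c * card S"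
    using bip_regular_card_nbhd_le_weighted_bound[OF reg assms(2), of "k - 1"] assms(4)
    unfolding NF_def NL_def by simp
  ultimately have count: "real (card NL) + real k * (real (card NF) - real (card NL))
                            \<le> real c * real (card S)"
    by (metis of_nat_add of_nat_diff of_nat_le_iff of_nat_mult)
  have "(\<delta> * real k - 1) * real c * real (card S)
          = real k * (\<delta> * real c * real (card S)) - real c * real (card S)"
    by (simp add: algebra_simps)
  also have "\<dots> \<le> real k * real (card NF) - real c * real (card S)"
    using expand by (simp add: mult_left_mono)
  also have "\<dots> \<le> (real k - 1) * real (card NL)"
    using count by (simp add: algebra_simps)
  finally show ?thesis
    using assms(4) unfolding NL_def by (simp add: field_simps)
qed

lemma hamming_list_eq_0_iff:
  assumes "length w = length w'"
  shows "hamming_list w w' = 0 \<longleftrightarrow> w = w'"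
  using assms by (auto simp: hamming_list_def list_eq_iff_nth_eq)

lemma length_restr [simp]: "length (restr ord d v x) = d"
  by (simp add: restr_def)

lemma hamming_restr_eq_deg_in_diff_set:
  assumes "valid_orderings R E d ord" and "E \<subseteq> {1..n} \<times> R" and "v \<in> R"
  shows "hamming_list (restr ord d v x) (restr ord d v y) = deg_in E (diff_set n x y) v"
proof -
  have bij: "bij_betw (ord v) {..<d} {u. (u, v) \<in> E}"
    using assms unfolding valid_orderings_def by blast
  have "hamming_list (restr ord d v x) (restr ord d v y)
          = card {j \<in> {..<d}. x (ord v j) \<noteq> y (ord v j)}"
    unfolding hamming_list_def restr_def by (auto intro: arg_cong[where f = card])
  also have "\<dots> = card {u \<in> {u. (u, v) \<in> E}. x u \<noteq> y u}"
    by (rule bij_betw_same_card, rule bij_betw_Collect[OF bij]) simp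
  also have "{u \<in> {u. (u, v) \<in> E}. x u \<noteq> y u} = {u \<in> diff_set n x y. (u, v) \<in> E}"
    using assms(2) unfolding diff_set_def by auto
  finally show ?thesis unfolding deg_in_def .
qed

lemma unsat_subset_nbhd_diff_set:
  assumes "bip_regular n R E c d" and "valid_orderings R E d ord"
    and "y \<in> tanner_code n R ord d C0"
  shows "unsat R ord d C0 x \<subseteq> nbhd E R (diff_set n x y)"
proof
  fix v assume v: "v \<in> unsat R ord d C0 x"
  then have "v \<in> R" and x_bad: "restr ord d v x \<notin> C0" unfolding unsat_def by auto
  have "restr ord d v y \<in> C0"
    using assms(3) \<open>v \<in> R\<close> unfolding tanner_code_def by blast
  with x_bad have "hamming_list (restr ord d v x) (restr ord d v y) \<noteq> 0"
    by (auto simp: hamming_list_eq_0_iff)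
  moreover have "E \<subseteq> {1..n} \<times> R" using assms(1) unfolding bip_regular_def by blast
  ultimately have "deg_in E (diff_set n x y) v \<noteq> 0"
    using hamming_restr_eq_deg_in_diff_set[OF assms(2) _ \<open>v \<in> R\<close>] by simp
  then show "v \<in> nbhd E R (diff_set n x y)"
    using \<open>v \<in> R\<close> by (simp add: nbhd_eq_deg_in diff_set_def)
qed

lemma nbhd_le_diff_set_subset_unsat:
  assumes "bip_regular n R E c d" and "valid_orderings R E d ord"
    and "min_distance C0 d0" and "y \<in> tanner_code n R ord d C0"
  shows "nbhd_le E R (d0 - 1) (diff_set n x y) \<subseteq> unsat R ord d C0 x"
proof
  fix v assume "v \<in> nbhd_le E R (d0 - 1) (diff_set n x y)"
  then have "v \<in> R" and k: "1 \<le> deg_in E (diff_set n x y) v" "deg_in E (diff_set n x y) v < d0"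
    by (auto simp: nbhd_le_eq_deg_in)
  have "E \<subseteq> {1..n} \<times> R" using assms(1) unfolding bip_regular_def by blast
  then have dist: "hamming_list (restr ord d v x) (restr ord d v y) = deg_in E (diff_set n x y) v"
    using hamming_restr_eq_deg_in_diff_set[OF assms(2) _ \<open>v \<in> R\<close>] by simp
  then have "restr ord d v x \<noteq> restr ord d v y"
    using k(1) hamming_list_eq_0_iff[of "restr ord d v x" "restr ord d v y"] by simp
  moreover have "restr ord d v y \<in> C0"
    using assms(4) \<open>v \<in> R\<close> unfolding tanner_code_def by blast
  moreover have "\<forall>w\<in>C0. \<forall>w'\<in>C0. w \<noteq> w' \<longrightarrow> d0 \<le> hamming_list w w'"
    using assms(3) unfolding min_distance_def by blast
  ultimately have "restr ord d v x \<notin> C0"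
    using dist k(2) by (metis not_less)
  then show "v \<in> unsat R ord d C0 x"
    using \<open>v \<in> R\<close> unfolding unsat_def by blast
qed

theorem lemma2p7:
  fixes n c d d0 :: nat and R :: "'r set" and E :: "(nat \<times> 'r) set"
    and \<alpha> \<delta> :: real and ord :: "'r \<Rightarrow> nat \<Rightarrow> nat" and C0 :: "bool list set"
    and x y :: "nat \<Rightarrow> bool"
  assumes "bip_expander n R E c d \<alpha> \<delta>"
    and "valid_orderings R E d ord"
    and "linear_code d C0"
    and "min_distance C0 d0" and "d0 \<ge> 2"
    and "y \<in> tanner_code n R ord d C0"
    and "real (dH n x y) \<le> \<alpha> * real n"
  shows "real c * real (card (diff_set n x y)) \<ge> real (card (unsat R ord d C0 x))
       \<and> real (card (unsat R ord d C0 x)) \<ge> real (card (nbhd_le E R (d0 - 1) (diff_set n x y)))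
       \<and> real (card (nbhd_le E R (d0 - 1) (diff_set n x y)))
           \<ge> (\<delta> * real d0 - 1) / (real d0 - 1) * real c * real (card (diff_set n x y))"
proof -
  define F where "F = diff_set n x y"
  have reg: "bip_regular n R E c d" using assms(1) unfolding bip_expander_def by blast
  have F: "F \<subseteq> {1..n}" "real (card F) \<le> \<alpha> * real n"
    using assms(7) unfolding F_def diff_set_def dH_def by auto
  have "finite (nbhd E R F)" using reg unfolding bip_regular_def by (simp add: finite_nbhd)
  then have "card (unsat R ord d C0 x) \<le> card (nbhd E R F)"
    using unsat_subset_nbhd_diff_set[OF reg assms(2,6)] unfolding F_def by (rule card_mono)
  also have "\<dots> \<le> c * card F" by (rule bip_regular_card_nbhd_bound[OF reg F(1)])
  finally have upper: "card (unsat R ord d C0 x) \<le> c * card F" .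
  have "finite (unsat R ord d C0 x)" using reg unfolding unsat_def bip_regular_def by simp
  then have middle: "card (nbhd_le E R (d0 - 1) F) \<le> card (unsat R ord d C0 x)"
    using nbhd_le_diff_set_subset_unsat[OF reg assms(2,4,6)] unfolding F_def by (rule card_mono)
  show ?thesis
    using of_nat_mono[OF upper] of_nat_mono[OF middle] expander_card_nbhd_le_lower_bound[OF assms(1) F assms(5)]
    unfolding F_def[symmetric] by simp
qed

end
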